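(* Let $n\geq 2$. If $\prec_1,\ldots,\prec_n$ are linear orders on $D_n$ which realize the product order $<$, then there is a permutation $\sigma\in S_n$ such that for all $i\leq n$ and all $\mathbf{a},\mathbf{b}\in D_n$, $a_i<b_i$ if and only if $\mathbf{a}\prec_{\sigma(i)}\mathbf{b}$.
   Context: Fix $n\geq 2$ and a set $D_n\subseteq\mathbb{Q}^n$ which is dense in $\mathbb{Q}^n$ (product topology) and such that no two distinct points of $D_n$ share a common coordinate. The product order: $\mathbf{a}<\mathbf{b}$ iff $a_i\leq b_i$ for all $i$ and $\mathbf{a}\neq\mathbf{b}$. Linear orders realize $<$ if their intersection is $<$. $S_n$ is the permutation group of $\{1,\ldots,n\}$. *)

theory Defs
  imports Complex_Main
begin

text \<open>Points of Q^n are functions from a finite index type 'n (with CARD('n) = n) to rat.\<close>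

definition prod_less :: "('n \<Rightarrow> rat) \<Rightarrow> ('n \<Rightarrow> rat) \<Rightarrow> bool" where
  "prod_less a b \<longleftrightarrow> (\<forall>i. a i \<le> b i) \<and> a \<noteq> b"

text \<open>Density in Q^n with the product topology (Q carrying its order topology):
  D meets every nonempty basic open box  prod_i (l_i, u_i).\<close>
definition dense_in_Qn :: "('n \<Rightarrow> rat) set \<Rightarrow> bool" where
  "dense_in_Qn D \<longleftrightarrow>
     (\<forall>l u. (\<forall>i. l i < u i) \<longrightarrow> (\<exists>d\<in>D. \<forall>i. l i < d i \<and> d i < u i))"

definition no_common_coord :: "('n \<Rightarrow> rat) set \<Rightarrow> bool" where
  "no_common_coord D \<longleftrightarrow> (\<forall>a\<in>D. \<forall>b\<in>D. a \<noteq> b \<longrightarrow> (\<forall>i. a i \<noteq> b i))"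

definition lin_order_on :: "'a set \<Rightarrow> 'a rel \<Rightarrow> bool" where
  "lin_order_on D r \<longleftrightarrow> r \<subseteq> D \<times> D \<and> strict_linear_order_on D r"

definition realizes :: "'a set \<Rightarrow> 'i set \<Rightarrow> ('i \<Rightarrow> 'a rel) \<Rightarrow> ('a \<Rightarrow> 'a \<Rightarrow> bool) \<Rightarrow> bool" where
  "realizes D I R P \<longleftrightarrow> (\<forall>a\<in>D. \<forall>b\<in>D. P a b \<longleftrightarrow> (\<forall>i\<in>I. (a, b) \<in> R i))"

end

theory Submission
  imports Defs
begin

text \<open>
  Call \<open>(p, q)\<close> a \<open>k\<close>-crossing pair if \<open>q\<^sub>k < p\<^sub>k\<close> and \<open>p\<^sub>m < q\<^sub>m\<close> for \<open>m \<noteq> k\<close>.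
  As \<open>p\<close> is not below \<open>q\<close> in the product order, some order \<open>\<prec>\<^sub>j\<close> reverses it,
  i.e. puts \<open>q\<close> before \<open>p\<close>. By density every crossing pair lies in a family of
  \<open>l\<close>-crossing pairs \<open>(P\<^sub>l, Q\<^sub>l)\<close>, one for each \<open>l\<close>, with \<open>P\<^sub>l < Q\<^sub>l\<^sub>'\<close> coordinatewise for
  \<open>l \<noteq> l'\<close>. An order reversing two pairs of such a family would contain the cycle
  \<open>Q\<^sub>l \<prec> P\<^sub>l \<prec> Q\<^sub>l\<^sub>' \<prec> P\<^sub>l\<^sub>' \<prec> Q\<^sub>l\<close>, so reversal is a bijection between the pairs of the
  family and the orders; in particular each crossing pair is reversed by exactly one order.
  Two \<open>k\<close>-crossing pairs \<open>(p, q)\<close>, \<open>(p', q')\<close> with \<open>p\<^sub>m, p'\<^sub>m < q\<^sub>m, q'\<^sub>m\<close> for all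
  \<open>m \<noteq> k\<close> are reversed by the same order, namely the one reversing a \<open>k\<close>-crossing pair
  squeezed between them. Finally, if \<open>a\<^sub>k < b\<^sub>k\<close> we can squeeze a \<open>k\<close>-crossing pair
  \<open>(p, q)\<close> with \<open>a < q\<close> and \<open>p < b\<close>, so the order reversing \<open>k\<close>-crossing pairs contains
  \<open>(a, b)\<close>.
\<close>

definition crossing_pair :: "'n \<Rightarrow> ('n \<Rightarrow> rat) \<Rightarrow> ('n \<Rightarrow> rat) \<Rightarrow> bool" where
  "crossing_pair k p q \<longleftrightarrow> q k < p k \<and> (\<forall>m. m \<noteq> k \<longrightarrow> p m < q m)"

definition crossing_family ::
    "('n \<Rightarrow> rat) set \<Rightarrow> ('n \<Rightarrow> 'n \<Rightarrow> rat) \<Rightarrow> ('n \<Rightarrow> 'n \<Rightarrow> rat) \<Rightarrow> bool" where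
  "crossing_family D P Q \<longleftrightarrow>
     (\<forall>l. P l \<in> D \<and> Q l \<in> D \<and> crossing_pair l (P l) (Q l)) \<and>
     (\<forall>l l' m. l \<noteq> l' \<longrightarrow> P l m < Q l' m)"

lemma dense_in_QnE:
  assumes "dense_in_Qn D" and "a < b" and "\<And>m. m \<noteq> k \<Longrightarrow> lo m < hi m"
  obtains x where "x \<in> D" and "a < x k" and "x k < b"
    and "\<And>m. m \<noteq> k \<Longrightarrow> lo m < x m \<and> x m < hi m"
proof -
  have "\<forall>i. (lo(k := a)) i < (hi(k := b)) i"
    using assms(2,3) by simp
  then obtain x where "x \<in> D" and "\<forall>i. (lo(k := a)) i < x i \<and> x i < (hi(k := b)) i"
    using assms(1) unfolding dense_in_Qn_def by blast
  then show thesis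
    by (metis fun_upd_other fun_upd_same that)
qed

lemma crossing_pair_in_box:
  assumes "dense_in_Qn D" and "\<alpha> < \<beta>"
  obtains p q where "p \<in> D" and "q \<in> D" and "crossing_pair k p q"
    and "\<alpha> < q k" and "p k < \<beta>" and "\<And>m. m \<noteq> k \<Longrightarrow> p m < u m \<and> v m < q m"
proof -
  define \<gamma> where "\<gamma> = (\<alpha> + \<beta>) / 2"
  have "\<alpha> < \<gamma>" "\<gamma> < \<beta>"
    using assms(2) unfolding \<gamma>_def by simp_all
  obtain p where p: "p \<in> D" "\<gamma> < p k" "p k < \<beta>"
    and p_off: "\<And>m. m \<noteq> k \<Longrightarrow> min (u m) (v m) - 1 < p m \<and> p m < min (u m) (v m)"
    by (rule dense_in_QnE[OF assms(1) \<open>\<gamma> < \<beta>\<close>,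
          of k "\<lambda>m. min (u m) (v m) - 1" "\<lambda>m. min (u m) (v m)"])
      auto
  obtain q where q: "q \<in> D" "\<alpha> < q k" "q k < \<gamma>"
    and q_off: "\<And>m. m \<noteq> k \<Longrightarrow> max (u m) (v m) < q m \<and> q m < max (u m) (v m) + 1"
    by (rule dense_in_QnE[OF assms(1) \<open>\<alpha> < \<gamma>\<close>,
          of k "\<lambda>m. max (u m) (v m)" "\<lambda>m. max (u m) (v m) + 1"])
      auto
  have "crossing_pair k p q"
    unfolding crossing_pair_def using p q p_off q_off by force
  with p q p_off q_off show thesis
    by (intro that) force+
qed

text \<open>The pairs added for \<open>l \<noteq> k\<close> are pushed outside the box spanned by \<open>p\<close> and \<open>q\<close>.\<close>

lemma crossing_pair_extends_to_family:
  assumes dense: "dense_in_Qn D" and "p \<in> D" and "q \<in> D" and pq: "crossing_pair k p q"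
  obtains P Q where "crossing_family D P Q" and "P k = p" and "Q k = q"
proof -
  have "\<exists>p' q'. l \<noteq> k \<longrightarrow> p' \<in> D \<and> q' \<in> D \<and> crossing_pair l p' q' \<and> p l < q' l \<and>
          p' l < q l \<and> (\<forall>m. m \<noteq> l \<longrightarrow> p' m < min (p m) (q m) \<and> max (p m) (q m) < q' m)" for l
  proof (cases "l = k")
    case False
    then have "p l < q l"
      using pq unfolding crossing_pair_def by simp
    then show ?thesis
      using crossing_pair_in_box[OF dense, of "p l" "q l" l
          "\<lambda>m. min (p m) (q m)" "\<lambda>m. max (p m) (q m)"] by blast
  qed simp
  then obtain P' Q' where PQ': "\<And>l. l \<noteq> k \<Longrightarrow> P' l \<in> D \<and> Q' l \<in> D \<and>
      crossing_pair l (P' l) (Q' l) \<and> p l < Q' l l \<and> P' l l < q l \<and>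
      (\<forall>m. m \<noteq> l \<longrightarrow> P' l m < min (p m) (q m) \<and> max (p m) (q m) < Q' l m)"
    by metis
  define P where "P = P'(k := p)"
  define Q where "Q = Q'(k := q)"
  have "P l m < Q l' m" if "l \<noteq> l'" for l l' m
  proof (cases "l = k")
    case True
    with that PQ'[of l'] show ?thesis
      unfolding P_def Q_def by (cases "m = l'") force+
  next
    case l: False
    show ?thesis
    proof (cases "l' = k")
      case True
      with l PQ'[of l] show ?thesis
        unfolding P_def Q_def by (cases "m = l") force+
    next
      case False
      with that l PQ'[of l] PQ'[of l'] show ?thesis
        unfolding P_def Q_def by (cases "m = l"; cases "m = l'") force+
    qed
  qed
  then have "crossing_family D P Q"
    unfolding crossing_family_def P_def Q_def using PQ' assms(2-4) by auto
  then show thesis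
    by (rule that) (simp_all add: P_def Q_def)
qed

lemma ex_crossing_family:
  fixes D :: "('n \<Rightarrow> rat) set"
  assumes "dense_in_Qn D"
  obtains P Q where "crossing_family D P Q"
proof -
  fix k :: 'n
  obtain p q where "p \<in> D" and "q \<in> D" and "crossing_pair k p q"
    using crossing_pair_in_box[OF assms zero_less_one, of k "\<lambda>_. 0" "\<lambda>_. 0"] by blast
  then show thesis
    using crossing_pair_extends_to_family[OF assms] that by blast
qed

locale product_order_realizer =
  fixes D :: "('n::finite \<Rightarrow> rat) set" and R :: "'n \<Rightarrow> ('n \<Rightarrow> rat) rel"
  assumes dense: "dense_in_Qn D"
    and lin: "\<And>j. lin_order_on D (R j)"
    and realizes: "realizes D UNIV R prod_less"
begin

lemma R_trans: "(x, y) \<in> R j \<Longrightarrow> (y, z) \<in> R j \<Longrightarrow> (x, z) \<in> R j"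
  using lin[of j] unfolding lin_order_on_def strict_linear_order_on_def trans_def by blast

lemma R_irrefl: "(x, x) \<notin> R j"
  using lin[of j] unfolding lin_order_on_def strict_linear_order_on_def irrefl_def by blast

lemma R_total: "x \<in> D \<Longrightarrow> y \<in> D \<Longrightarrow> x \<noteq> y \<Longrightarrow> (x, y) \<in> R j \<or> (y, x) \<in> R j"
  using lin[of j] unfolding lin_order_on_def strict_linear_order_on_def total_on_def by blast

lemma coordwise_less_imp_R:
  assumes "x \<in> D" and "y \<in> D" and "\<And>i. x i < y i"
  shows "(x, y) \<in> R j"
proof -
  have "prod_less x y"
    unfolding prod_less_def using assms(3) by (metis less_imp_le less_irrefl)
  then show ?thesis
    using realizes assms(1,2) unfolding realizes_def by blast
qed

lemma ex_reverser:
  assumes "p \<in> D" and "q \<in> D" and "q k < p k"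
  obtains j where "(q, p) \<in> R j"
proof -
  have "\<not> prod_less p q"
    unfolding prod_less_def using assms(3) by (meson not_le)
  then obtain j where "(p, q) \<notin> R j"
    using realizes assms(1,2) unfolding realizes_def by blast
  moreover have "p \<noteq> q"
    using assms(3) by auto
  ultimately show thesis
    using R_total assms(1,2) that by blast
qed

lemma crossing_family_reverser_inj:
  assumes "crossing_family D P Q"
    and "(Q l, P l) \<in> R j" and "(Q l', P l') \<in> R j"
  shows "l = l'"
proof (rule ccontr)
  assume "l \<noteq> l'"
  then have "(P l, Q l') \<in> R j" and "(P l', Q l) \<in> R j"
    using assms(1) unfolding crossing_family_def by (auto intro: coordwise_less_imp_R)
  then have "(Q l, Q l) \<in> R j"
    using assms(2,3) R_trans by meson
  then show False
    using R_irrefl by blast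
qed

lemma crossing_family_reverser_bij:
  assumes fam: "crossing_family D P Q"
  obtains \<tau> where "bij \<tau>" and "\<And>l j. (Q l, P l) \<in> R j \<longleftrightarrow> j = \<tau> l"
proof -
  have "\<exists>j. (Q l, P l) \<in> R j" for l
    using fam unfolding crossing_family_def crossing_pair_def by (metis ex_reverser)
  then obtain \<tau> where \<tau>: "\<And>l. (Q l, P l) \<in> R (\<tau> l)"
    by metis
  have "inj \<tau>"
    using crossing_family_reverser_inj[OF fam] \<tau> by (metis injI)
  then have "bij \<tau>"
    by (simp add: bij_def finite_UNIV_inj_surj)
  have "j = \<tau> l" if "(Q l, P l) \<in> R j" for l j
  proof -
    obtain l' where "j = \<tau> l'"
      using \<open>bij \<tau>\<close> by (metis bij_pointE)
    then have "l' = l"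
      using crossing_family_reverser_inj[OF fam] \<tau> that by blast
    with \<open>j = \<tau> l'\<close> show ?thesis
      by simp
  qed
  with \<open>bij \<tau>\<close> \<tau> show thesis
    using that by blast
qed

lemma crossing_pair_reverser_unique:
  assumes "p \<in> D" and "q \<in> D" and "crossing_pair k p q"
    and "(q, p) \<in> R j" and "(q, p) \<in> R j'"
  shows "j = j'"
proof -
  obtain P Q where fam: "crossing_family D P Q" and "P k = p" and "Q k = q"
    using crossing_pair_extends_to_family[OF dense assms(1-3)] .
  obtain \<tau> where "\<And>l j. (Q l, P l) \<in> R j \<longleftrightarrow> j = \<tau> l"
    using crossing_family_reverser_bij[OF fam] by blast
  then show ?thesis
    using assms(4,5) \<open>P k = p\<close> \<open>Q k = q\<close> by metis
qed

lemma separated_crossing_pairs_same_reverser: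
  assumes "p \<in> D" and "q \<in> D" and pq: "crossing_pair k p q"
    and "p' \<in> D" and "q' \<in> D" and pq': "crossing_pair k p' q'"
    and separated: "\<And>m. m \<noteq> k \<Longrightarrow> p m < q' m \<and> p' m < q m"
    and "(q, p) \<in> R j" and "(q', p') \<in> R j'"
  shows "j = j'"
proof -
  define lo where "lo m = max (p m) (p' m)" for m
  define hi where "hi m = min (q m) (q' m)" for m
  have lo_hi: "lo m < hi m" if "m \<noteq> k" for m
    using pq pq' separated[OF that] that unfolding lo_def hi_def crossing_pair_def by simp
  obtain w where "w \<in> D" and "lo k < w k"
    and w: "\<And>m. m \<noteq> k \<Longrightarrow> lo m < w m \<and> w m < (lo m + hi m) / 2"
    by (rule dense_in_QnE[OF dense, of "lo k" "lo k + 1" k lo "\<lambda>m. (lo m + hi m) / 2"])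
      (use lo_hi in auto)
  obtain z where "z \<in> D" and "z k < hi k"
    and z: "\<And>m. m \<noteq> k \<Longrightarrow> (lo m + hi m) / 2 < z m \<and> z m < hi m"
    by (rule dense_in_QnE[OF dense, of "hi k - 1" "hi k" k "\<lambda>m. (lo m + hi m) / 2" hi])
      (use lo_hi in auto)
  have "crossing_pair k w z"
    using pq \<open>lo k < w k\<close> \<open>z k < hi k\<close> w z
    unfolding crossing_pair_def lo_def hi_def by force
  have "z i < q i" "z i < q' i" "p i < w i" "p' i < w i" for i
    using \<open>lo k < w k\<close> \<open>z k < hi k\<close> w[of i] z[of i]
    unfolding lo_def hi_def by (cases "i = k"; force)+
  then have "(z, w) \<in> R j" and "(z, w) \<in> R j'"
    using assms \<open>w \<in> D\<close> \<open>z \<in> D\<close> R_trans coordwise_less_imp_R by meson+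
  then show ?thesis
    using crossing_pair_reverser_unique[OF \<open>w \<in> D\<close> \<open>z \<in> D\<close> \<open>crossing_pair k w z\<close>] by blast
qed

lemma crossing_pair_reverser_contains_coord_less:
  assumes "p \<in> D" and "q \<in> D" and pq: "crossing_pair k p q" and "(q, p) \<in> R j"
    and "a \<in> D" and "b \<in> D" and "a k < b k"
  shows "(a, b) \<in> R j"
proof -
  obtain p' q' where "p' \<in> D" and "q' \<in> D" and pq': "crossing_pair k p' q'"
    and "a k < q' k" and "p' k < b k"
    and off: "\<And>m. m \<noteq> k \<Longrightarrow> p' m < min (b m) (q m) \<and> max (a m) (p m) < q' m"
    using crossing_pair_in_box[OF dense \<open>a k < b k\<close>,
        of k "\<lambda>m. min (b m) (q m)" "\<lambda>m. max (a m) (p m)"]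
    by blast
  obtain j' where "(q', p') \<in> R j'"
    using ex_reverser[OF \<open>p' \<in> D\<close> \<open>q' \<in> D\<close>] pq' unfolding crossing_pair_def by blast
  moreover have "j' = j"
    using separated_crossing_pairs_same_reverser[OF \<open>p' \<in> D\<close> \<open>q' \<in> D\<close> pq' assms(1-3)]
      off \<open>(q', p') \<in> R j'\<close> assms(4) by fastforce
  moreover have "a i < q' i" and "p' i < b i" for i
    using \<open>a k < q' k\<close> \<open>p' k < b k\<close> off[of i] by (cases "i = k"; simp)+
  then have "(a, q') \<in> R j" and "(p', b) \<in> R j"
    using assms(5,6) \<open>p' \<in> D\<close> \<open>q' \<in> D\<close> by (simp_all add: coordwise_less_imp_R)
  ultimately show ?thesis
    using R_trans by blast
qed

lemma crossing_pair_reverser_eq_coord_less: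
  assumes "no_common_coord D"
    and "p \<in> D" and "q \<in> D" and "crossing_pair k p q" and "(q, p) \<in> R j"
    and "a \<in> D" and "b \<in> D"
  shows "(a, b) \<in> R j \<longleftrightarrow> a k < b k"
proof
  assume ab: "(a, b) \<in> R j"
  then have "a \<noteq> b"
    using R_irrefl by blast
  then have "a k \<noteq> b k"
    using assms(1,6,7) unfolding no_common_coord_def by blast
  moreover have "\<not> b k < a k"
    using crossing_pair_reverser_contains_coord_less[OF assms(2-5,7,6)] ab R_trans R_irrefl
    by blast
  ultimately show "a k < b k"
    by simp
qed (rule crossing_pair_reverser_contains_coord_less[OF assms(2-7)])

end

theorem lemma6p5:
  fixes D :: "('n::finite \<Rightarrow> rat) set"
    and R :: "'n \<Rightarrow> ('n \<Rightarrow> rat) rel"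
  assumes "card (UNIV :: 'n set) \<ge> 2"
    and "dense_in_Qn D"
    and "no_common_coord D"
    and "\<And>j. lin_order_on D (R j)"
    and "realizes D UNIV R prod_less"
  shows "\<exists>\<sigma>::'n \<Rightarrow> 'n. bij \<sigma> \<and>
           (\<forall>i. \<forall>a\<in>D. \<forall>b\<in>D. a i < b i \<longleftrightarrow> (a, b) \<in> R (\<sigma> i))"
proof -
  interpret product_order_realizer D R
    using assms(2,4,5) by unfold_locales
  obtain P Q where fam: "crossing_family D P Q"
    using ex_crossing_family[OF assms(2)] by blast
  obtain \<sigma> where "bij \<sigma>" and reverser_iff: "\<And>i j. (Q i, P i) \<in> R j \<longleftrightarrow> j = \<sigma> i"
    using crossing_family_reverser_bij[OF fam] by metis
  have reverser: "(Q i, P i) \<in> R (\<sigma> i)" for i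
    by (simp add: reverser_iff)
  have pairs: "P i \<in> D" "Q i \<in> D" "crossing_pair i (P i) (Q i)" for i
    using fam unfolding crossing_family_def by simp_all
  have "a i < b i \<longleftrightarrow> (a, b) \<in> R (\<sigma> i)" if "a \<in> D" and "b \<in> D" for i a b
    using crossing_pair_reverser_eq_coord_less[OF assms(3) pairs reverser that] by (rule sym)
  with \<open>bij \<sigma>\<close> show ?thesis
    by (intro exI[of _ \<sigma>]) simp
qed

end
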